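(* Let $n$ be a positive integer and $w_1\le\dots\le w_m$ a feasible partition of $n$ with partial sums $R_i=w_1+\dots+w_i$, $R_0=0$. Then for every $1\le i\le m$, $w_i \le \frac{2R_i+1}{3}$.
   Context: A weighing partition of a positive integer $n$ is a multiset of positive integers summing to $n$ such that every integer $\ell$ with $1\le\ell\le n$ is a sum $\sum_j u_jw_j$ with $u_j\in\{-1,0,1\}$. A feasible partition of $n$ is a weighing partition of $n$ whose number of parts $m$ is minimal among all weighing partitions of $n$, written $w_1\le\dots\le w_m$. *)

theory Defs
  imports Complex_Main
begin

text \<open>A partition of n is represented by a list of its parts (a multiset up to order).\<close>

definition weighing_partition :: "nat \<Rightarrow> nat list \<Rightarrow> bool" where
  "weighing_partition n ws \<longleftrightarrow>
     (\<forall>w\<in>set ws. 0 < w) \<and> sum_list ws = n \<and>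
     (\<forall>l\<in>{1..n}. \<exists>u :: nat \<Rightarrow> int.
        (\<forall>j<length ws. u j \<in> {-1, 0, 1}) \<and>
        int l = (\<Sum>j<length ws. u j * int (ws ! j)))"

definition feasible_partition :: "nat \<Rightarrow> nat list \<Rightarrow> bool" where
  "feasible_partition n ws \<longleftrightarrow>
     weighing_partition n ws \<and>
     (\<forall>vs. weighing_partition n vs \<longrightarrow> length ws \<le> length vs)"

end

theory Submission
  imports Defs
begin

text \<open>If \<open>l = n - m\<close> is written as \<open>\<Sum> u\<^sub>j w\<^sub>j\<close> with \<open>u\<^sub>j \<in> {-1,0,1}\<close>, then
  \<open>m = \<Sum> (1 - u\<^sub>j) w\<^sub>j\<close> has coefficients in \<open>{0,1,2}\<close>. Such a representation of
  \<open>m = 2R\<^sub>k + 1\<close> cannot use any part \<open>w\<^sub>j \<ge> w\<^sub>k\<close> when \<open>w\<^sub>k > m\<close>, and the parts below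
  index \<open>k\<close> only reach \<open>2R\<^sub>k\<close>. Hence \<open>w\<^sub>k \<le> 2R\<^sub>k + 1\<close>, i.e. \<open>3w\<^sub>i \<le> 2R\<^sub>i + 1\<close>.\<close>

lemma weighing_partition_complement_representation:
  assumes "weighing_partition n ws" and "m < n"
  obtains v :: "nat \<Rightarrow> int"
  where "\<forall>j<length ws. v j \<in> {0, 1, 2}"
    and "int m = (\<Sum>j<length ws. v j * int (ws ! j))"
proof -
  have "n - m \<in> {1..n}" using \<open>m < n\<close> by auto
  then obtain u :: "nat \<Rightarrow> int"
    where u: "\<forall>j<length ws. u j \<in> {-1, 0, 1}"
      and l: "int (n - m) = (\<Sum>j<length ws. u j * int (ws ! j))"
    using assms(1) unfolding weighing_partition_def by blast
  have "n = (\<Sum>j<length ws. ws ! j)"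
    using assms(1) by (simp add: weighing_partition_def sum_list_sum_nth atLeast0LessThan)
  then have "int m = (\<Sum>j<length ws. int (ws ! j)) - int (n - m)"
    using \<open>m < n\<close> by simp
  also have "\<dots> = (\<Sum>j<length ws. (1 - u j) * int (ws ! j))"
    unfolding l by (simp add: left_diff_distrib sum_subtractf)
  finally have "int m = (\<Sum>j<length ws. (1 - u j) * int (ws ! j))" .
  moreover have "\<forall>j<length ws. 1 - u j \<in> {0, 1, 2}" using u by auto
  ultimately show thesis using that[of "\<lambda>j. 1 - u j"] by simp
qed

lemma sorted_weighted_sum_less_nth_le_prefix:
  fixes ws :: "nat list" and v :: "nat \<Rightarrow> int"
  assumes "sorted ws" and "k < length ws"
    and v: "\<forall>j<length ws. v j \<in> {0, 1, 2}"
    and small: "(\<Sum>j<length ws. v j * int (ws ! j)) < int (ws ! k)"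
  shows "(\<Sum>j<length ws. v j * int (ws ! j)) \<le> 2 * int (sum_list (take k ws))"
proof -
  let ?t = "\<lambda>j. v j * int (ws ! j)"
  have nonneg: "0 \<le> ?t j" if "j < length ws" for j using v that by auto
  have tail_zero: "?t j = 0" if "k \<le> j" "j < length ws" for j
  proof -
    have "?t j \<le> (\<Sum>j<length ws. ?t j)"
      using that nonneg by (intro member_le_sum) auto
    also have "\<dots> < int (ws ! j)"
      using small sorted_nth_mono[OF \<open>sorted ws\<close> that] by linarith
    finally show ?thesis using v that by auto
  qed
  have "(\<Sum>j<length ws. ?t j) = (\<Sum>j<k. ?t j) + (\<Sum>j\<in>{k..<length ws}. ?t j)"
    using \<open>k < length ws\<close> by (simp add: lessThan_atLeast0 sum.atLeastLessThan_concat)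
  also have "(\<Sum>j\<in>{k..<length ws}. ?t j) = 0" by (intro sum.neutral ballI tail_zero) auto
  also have "(\<Sum>j<k. ?t j) \<le> (\<Sum>j<k. 2 * int (ws ! j))"
  proof (intro sum_mono mult_right_mono)
    fix j assume "j \<in> {..<k}"
    then have "v j \<in> {0, 1, 2}" using v \<open>k < length ws\<close> by simp
    then show "v j \<le> 2" by auto
  qed simp
  also have "\<dots> = 2 * int (sum_list (take k ws))"
    using \<open>k < length ws\<close>
    by (simp add: sum_list_sum_nth atLeast0LessThan min_def sum_distrib_left)
  finally show ?thesis by simp
qed

lemma weighing_partition_sorted_nth_le:
  assumes wp: "weighing_partition n ws" and "sorted ws" and k: "k < length ws"
  shows "ws ! k \<le> 2 * sum_list (take k ws) + 1"
proof (rule ccontr)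
  define m where "m = 2 * sum_list (take k ws) + 1"
  assume "\<not> ws ! k \<le> 2 * sum_list (take k ws) + 1"
  then have "m < ws ! k" unfolding m_def by simp
  moreover have "ws ! k \<le> n"
    using wp k elem_le_sum_list by (auto simp: weighing_partition_def)
  ultimately have "m < n" by simp
  then obtain v :: "nat \<Rightarrow> int"
    where v: "\<forall>j<length ws. v j \<in> {0, 1, 2}"
      and m: "int m = (\<Sum>j<length ws. v j * int (ws ! j))"
    by (rule weighing_partition_complement_representation[OF wp])
  have "int m \<le> 2 * int (sum_list (take k ws))"
    using sorted_weighted_sum_less_nth_le_prefix[OF \<open>sorted ws\<close> k v] m \<open>m < ws ! k\<close> by simp
  then show False unfolding m_def by simp
qed

theorem mainTheorem5:
  fixes n :: nat and ws :: "nat list" and i :: nat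
  assumes "0 < n"
    and "feasible_partition n ws"
    and "sorted ws"
    and "1 \<le> i" and "i \<le> length ws"
  shows "real (ws ! (i - 1)) \<le> (2 * real (sum_list (take i ws)) + 1) / 3"
proof -
  have wp: "weighing_partition n ws"
    using assms(2) feasible_partition_def by blast
  obtain k where i: "i = Suc k" using \<open>1 \<le> i\<close> by (cases i) auto
  with \<open>i \<le> length ws\<close> have k: "k < length ws" by simp
  then have "sum_list (take i ws) = sum_list (take k ws) + ws ! k"
    by (simp add: i take_Suc_conv_app_nth)
  with weighing_partition_sorted_nth_le[OF wp \<open>sorted ws\<close> k] show ?thesis
    by (simp add: i)
qed

end
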